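(* Let $\alpha^s=\alpha^s(t,x)$ and $\beta^s=\beta^s(t,x)$, $s=1,\dots,p$, be smooth solutions of the backward heat equation ($\alpha^s_t+\alpha^s_{xx}=0$, $\beta^s_t+\beta^s_{xx}=0$) satisfying $\sum_{s=1}^p(\alpha^s_x\beta^s-\alpha^s\beta^s_x)=0$. Then for all integers $i,j\ge0$, $$\sum_{s=1}^p\bigl(\alpha^s_i\beta^s_j-\alpha^s_j\beta^s_i\bigr)=0,$$ where the subscripts $i,j$ denote the $i$-th and $j$-th order derivatives with respect to $x$. *)

theory Defs
  imports "HOL-Analysis.Analysis"
begin

definition dx :: "(real \<times> real \<Rightarrow> real) \<Rightarrow> real \<times> real \<Rightarrow> real" where
  "dx f = (\<lambda>(t, x). deriv (\<lambda>y. f (t, y)) x)"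

definition dt :: "(real \<times> real \<Rightarrow> real) \<Rightarrow> real \<times> real \<Rightarrow> real" where
  "dt f = (\<lambda>(t, x). deriv (\<lambda>s. f (s, x)) t)"

fun partials :: "bool list \<Rightarrow> (real \<times> real \<Rightarrow> real) \<Rightarrow> real \<times> real \<Rightarrow> real" where
  "partials [] f = f"
| "partials (b # bs) f = (if b then dt else dx) (partials bs f)"

definition smooth2 :: "(real \<times> real \<Rightarrow> real) \<Rightarrow> bool" where
  "smooth2 f \<longleftrightarrow> (\<forall>ops z. partials ops f differentiable (at z))"

definition dxn :: "nat \<Rightarrow> (real \<times> real \<Rightarrow> real) \<Rightarrow> real \<times> real \<Rightarrow> real" where
  "dxn i f = (dx ^^ i) f"

end

theory Submission imports Defs begin

text \<open>Write \<open>W(i,j) = \<Sum>\<^sub>s (\<alpha>\<^sup>s\<^sub>i \<beta>\<^sup>s\<^sub>j - \<alpha>\<^sup>s\<^sub>j \<beta>\<^sup>s\<^sub>i)\<close>. It is antisymmetric, and since the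
  \<open>x\<close>-derivative raises one index and the backward heat equation turns the \<open>t\<close>-derivative into
  minus two \<open>x\<close>-derivatives,
  \<open>\<partial>\<^sub>x W(i,j) = W(i+1,j) + W(i,j+1)\<close> and \<open>\<partial>\<^sub>t W(i,j) = -(W(i+2,j) + W(i,j+2))\<close>.
  By induction on \<open>n = i + j\<close>: if all \<open>W\<close> of weights \<open>n\<close> and \<open>n + 1\<close> vanish, the first identity
  gives \<open>W(n+2,0) = -W(n+1,1) = W(n,2)\<close> while the second gives \<open>W(n+2,0) = -W(n,2)\<close>;
  so \<open>W(n+2,0) = 0\<close>, and the first identity propagates this along the whole weight \<open>n + 2\<close>.\<close>

lemma mixed_partials_commute:
  fixes g gx gt gtx gxt :: "real \<times> real \<Rightarrow> real"
  assumes has_gx: "\<And>t y. ((\<lambda>y. g (t, y)) has_real_derivative gx (t, y)) (at y)"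
    and has_gt: "\<And>s y. ((\<lambda>s. g (s, y)) has_real_derivative gt (s, y)) (at s)"
    and has_gtx: "\<And>s y. ((\<lambda>y. gt (s, y)) has_real_derivative gtx (s, y)) (at y)"
    and has_gxt: "\<And>s y. ((\<lambda>s. gx (s, y)) has_real_derivative gxt (s, y)) (at s)"
    and cont: "continuous_on UNIV gtx"
  shows "gxt (t0, x0) = gtx (t0, x0)"
proof -
  define a where "a = t0 - 1"
  define b where "b = t0 + 1"
  have ftc: "((\<lambda>s. gt (s, y)) has_integral (g (t, y) - g (a, y))) {a..t}" if "a \<le> t" for t y
    using that by (intro fundamental_theorem_of_calculus)
      (auto simp: has_real_derivative_iff_has_vector_derivative[symmetric]
            intro: has_field_derivative_at_within has_gt)
  have cont_swapped: "continuous_on (UNIV \<times> cbox a t) (\<lambda>(y, s). gtx (s, y))" for t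
  proof -
    have "continuous_on UNIV (gtx \<circ> prod.swap)"
      by (intro continuous_on_compose continuous_intros) (auto intro: continuous_on_subset[OF cont])
    then show ?thesis
      by (rule continuous_on_subset[THEN continuous_on_eq]) (auto simp: prod.swap_def)
  qed
  \<comment> \<open>Differentiating the fundamental theorem of calculus under the integral sign.\<close>
  have gx_integral: "gx (t, x0) - gx (a, x0) = integral {a..t} (\<lambda>s. gtx (s, x0))" if "a \<le> t" for t
  proof -
    have "((\<lambda>y. integral (cbox a t) (\<lambda>s. gt (s, y))) has_field_derivative
            integral (cbox a t) (\<lambda>s. gtx (s, x0))) (at x0 within UNIV)"
      by (rule leibniz_rule_field_derivative[where f = "\<lambda>y s. gt (s, y)" and fx = "\<lambda>y s. gtx (s, y)"])
        (use ftc[OF that] cont_swapped in \<open>auto intro: has_gtx has_field_derivative_at_within simp: cbox_interval\<close>)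
    moreover have "integral (cbox a t) (\<lambda>s. gt (s, y)) = g (t, y) - g (a, y)" for y
      using ftc[OF that] by (simp add: cbox_interval integral_unique)
    ultimately have "((\<lambda>y. g (t, y) - g (a, y)) has_real_derivative integral {a..t} (\<lambda>s. gtx (s, x0))) (at x0)"
      by (simp add: cbox_interval)
    moreover have "((\<lambda>y. g (t, y) - g (a, y)) has_real_derivative gx (t, x0) - gx (a, x0)) (at x0)"
      by (intro derivative_intros has_gx)
    ultimately show ?thesis by (metis DERIV_unique)
  qed
  have ab: "a < t0" "t0 < b" by (auto simp: a_def b_def)
  have "continuous_on {a..b} (\<lambda>s. gtx (s, x0))"
    by (intro continuous_on_compose2[OF cont] continuous_intros) auto
  then have "((\<lambda>t. integral {a..t} (\<lambda>s. gtx (s, x0))) has_real_derivative gtx (t0, x0)) (at t0)"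
    using integral_has_real_derivative[of a b "\<lambda>s. gtx (s, x0)" t0] ab
    by (simp add: at_within_Icc_at)
  moreover have "((\<lambda>t. integral {a..t} (\<lambda>s. gtx (s, x0))) has_real_derivative gxt (t0, x0)) (at t0)"
  proof (rule has_field_derivative_transform_within_open)
    show "((\<lambda>t. gx (t, x0) - gx (a, x0)) has_real_derivative gxt (t0, x0)) (at t0)"
      using DERIV_diff[OF has_gxt DERIV_const] by simp
  qed (use ab gx_integral in \<open>auto intro: open_greaterThanLessThan[of a b]\<close>)
  ultimately show ?thesis by (metis DERIV_unique)
qed

lemma partials_append: "partials ops (partials ops' f) = partials (ops @ ops') f"
  by (induction ops) auto

lemma dxn_Suc: "dxn (Suc i) f = dx (dxn i f)"
  by (simp add: dxn_def)

lemma dxn_eq_partials: "dxn i f = partials (replicate i False) f"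
  by (induction i) (auto simp: dxn_def)

lemma smooth2_partials: "smooth2 f \<Longrightarrow> smooth2 (partials ops f)"
  unfolding smooth2_def by (simp add: partials_append)

lemma smooth2_dx: "smooth2 f \<Longrightarrow> smooth2 (dx f)"
  using smooth2_partials[of f "[False]"] by simp

lemma smooth2_dt: "smooth2 f \<Longrightarrow> smooth2 (dt f)"
  using smooth2_partials[of f "[True]"] by simp

lemma smooth2_dxn: "smooth2 f \<Longrightarrow> smooth2 (dxn i f)"
  by (simp add: dxn_eq_partials smooth2_partials)

lemma smooth2_imp_differentiable: "smooth2 f \<Longrightarrow> f differentiable (at z)"
  unfolding smooth2_def by (metis partials.simps(1))

lemma smooth2_imp_continuous_on: "smooth2 f \<Longrightarrow> continuous_on UNIV f"
  by (meson differentiable_at_withinI differentiable_imp_continuous_on differentiable_on_def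
      smooth2_imp_differentiable)

lemma has_dx:
  assumes "smooth2 f"
  shows "((\<lambda>y. f (t, y)) has_real_derivative dx f (t, y)) (at y)"
proof -
  have "(\<lambda>y. (t, y)) differentiable (at y)"
    by (auto intro!: derivative_intros simp: differentiable_def)
  then have "(\<lambda>y. f (t, y)) differentiable (at y)"
    using differentiable_compose[OF smooth2_imp_differentiable[OF assms]] by blast
  then show ?thesis
    by (simp add: dx_def DERIV_deriv_iff_real_differentiable)
qed

lemma has_dt:
  assumes "smooth2 f"
  shows "((\<lambda>s. f (s, y)) has_real_derivative dt f (s, y)) (at s)"
proof -
  have "(\<lambda>s. (s, y)) differentiable (at s)"
    by (auto intro!: derivative_intros simp: differentiable_def)
  then have "(\<lambda>s. f (s, y)) differentiable (at s)"
    using differentiable_compose[OF smooth2_imp_differentiable[OF assms]] by blast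
  then show ?thesis
    by (simp add: dt_def DERIV_deriv_iff_real_differentiable)
qed

lemma dt_dx:
  assumes "smooth2 f"
  shows "dt (dx f) = dx (dt f)"
proof (rule ext, clarify)
  fix t x
  show "dt (dx f) (t, x) = dx (dt f) (t, x)"
    by (rule mixed_partials_commute)
      (use assms in \<open>auto intro: has_dx has_dt smooth2_dx smooth2_dt smooth2_imp_continuous_on\<close>)
qed

lemma dx_uminus:
  assumes "smooth2 f"
  shows "dx (\<lambda>z. - f z) = (\<lambda>z. - dx f z)"
proof (rule ext, clarify)
  fix t x
  show "dx (\<lambda>z. - f z) (t, x) = - dx f (t, x)"
    using DERIV_imp_deriv[OF DERIV_minus[OF has_dx[OF assms]]] by (simp add: dx_def)
qed

lemma dt_dxn_backward_heat:
  assumes "smooth2 f" and heat: "\<And>z. dt f z + dxn 2 f z = 0"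
  shows "dt (dxn i f) = (\<lambda>z. - dxn (Suc (Suc i)) f z)"
proof (induction i)
  case 0
  show ?case
    using heat by (auto simp: eq_neg_iff_add_eq_0 numeral_2_eq_2 dxn_def)
next
  case (Suc i)
  have "dt (dxn (Suc i) f) = dx (dt (dxn i f))"
    by (simp add: dxn_Suc dt_dx smooth2_dxn assms)
  also have "\<dots> = dx (\<lambda>z. - dxn (Suc (Suc i)) f z)"
    using Suc by simp
  also have "\<dots> = (\<lambda>z. - dxn (Suc (Suc (Suc i))) f z)"
    by (subst dx_uminus[OF smooth2_dxn[OF assms(1)]]) (simp add: dxn_Suc)
  finally show ?case .
qed

lemma has_dt_dxn_backward_heat:
  assumes "smooth2 f" and "\<And>z. dt f z + dxn 2 f z = 0"
  shows "((\<lambda>t. dxn i f (t, x)) has_real_derivative - dxn (Suc (Suc i)) f (t, x)) (at t)"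
  using has_dt[OF smooth2_dxn[OF assms(1)], of i x t] dt_dxn_backward_heat[OF assms] by simp

lemma vanishing_by_weight:
  fixes W :: "nat \<Rightarrow> nat \<Rightarrow> 'a \<Rightarrow> real"
  assumes antisym: "\<And>i j z. W j i z = - W i j z"
    and base: "W 1 0 = (\<lambda>_. 0)"
    and x_step: "\<And>i j z. W i j = (\<lambda>_. 0) \<Longrightarrow> W (Suc i) j z = - W i (Suc j) z"
    and t_step: "\<And>i j z. W i j = (\<lambda>_. 0) \<Longrightarrow> W (Suc (Suc i)) j z = - W i (Suc (Suc j)) z"
  shows "W i j = (\<lambda>_. 0)"
proof -
  define vanishes where "vanishes n \<longleftrightarrow> (\<forall>i j. i + j = n \<longrightarrow> W i j = (\<lambda>_. 0))" for n
  have step: "vanishes (Suc (Suc n))" if n: "vanishes n" and n1: "vanishes (Suc n)" for n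
  proof -
    have top: "W (Suc (Suc n)) 0 z = 0" for z
    proof -
      have "W (Suc (Suc n)) 0 z = - W (Suc n) 1 z"
        using x_step[of "Suc n" 0] n1 by (simp add: vanishes_def)
      also have "\<dots> = W n 2 z"
        using x_step[of n 1] n1 by (simp add: vanishes_def numeral_2_eq_2)
      finally show ?thesis
        using t_step[of n 0] n by (simp add: vanishes_def numeral_2_eq_2)
    qed
    have "W i k = (\<lambda>_. 0)" if "i + k = Suc (Suc n)" for i k
      using that
    proof (induction k arbitrary: i)
      case 0
      then show ?case using top by auto
    next
      case (Suc k)
      have "W (Suc i) k = (\<lambda>_. 0)" and "W i k = (\<lambda>_. 0)"
        using Suc n1 by (auto simp: vanishes_def)
      then show ?case using x_step[of i k] by fastforce
    qed
    then show ?thesis by (simp add: vanishes_def)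
  qed
  have "vanishes n \<and> vanishes (Suc n)" for n
  proof (induction n)
    case 0
    have "W 0 0 = (\<lambda>_. 0)" "W 0 1 = (\<lambda>_. 0)"
      using antisym[of 0 0] antisym[of 1 0] base by (auto dest: fun_cong)
    then show ?case using base by (auto simp: vanishes_def add_is_1)
  next
    case (Suc n)
    then show ?case using step by blast
  qed
  then show ?thesis by (simp add: vanishes_def)
qed

definition wronskian ::
    "'s set \<Rightarrow> ('s \<Rightarrow> real \<times> real \<Rightarrow> real) \<Rightarrow> ('s \<Rightarrow> real \<times> real \<Rightarrow> real) \<Rightarrow> nat \<Rightarrow> nat \<Rightarrow> real \<times> real \<Rightarrow> real"
  where "wronskian S \<alpha> \<beta> i j z =
    (\<Sum>s\<in>S. dxn i (\<alpha> s) z * dxn j (\<beta> s) z - dxn j (\<alpha> s) z * dxn i (\<beta> s) z)"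

lemma wronskian_swap: "wronskian S \<alpha> \<beta> j i z = - wronskian S \<alpha> \<beta> i j z"
  by (simp add: wronskian_def sum_negf[symmetric])

lemma wronskian_1_0:
  "wronskian S \<alpha> \<beta> 1 0 z = (\<Sum>s\<in>S. dx (\<alpha> s) z * \<beta> s z - \<alpha> s z * dx (\<beta> s) z)"
  by (simp add: wronskian_def dxn_def)

lemma has_dx_wronskian:
  assumes "\<And>s. s \<in> S \<Longrightarrow> smooth2 (\<alpha> s) \<and> smooth2 (\<beta> s)"
  shows "((\<lambda>x. wronskian S \<alpha> \<beta> i j (t, x)) has_real_derivative
           wronskian S \<alpha> \<beta> (Suc i) j (t, x) + wronskian S \<alpha> \<beta> i (Suc j) (t, x)) (at x)"
proof -
  have "((\<lambda>x. wronskian S \<alpha> \<beta> i j (t, x)) has_real_derivative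
      (\<Sum>s\<in>S. dxn i (\<alpha> s) (t, x) * dx (dxn j (\<beta> s)) (t, x) + dx (dxn i (\<alpha> s)) (t, x) * dxn j (\<beta> s) (t, x)
        - (dxn j (\<alpha> s) (t, x) * dx (dxn i (\<beta> s)) (t, x) + dx (dxn j (\<alpha> s)) (t, x) * dxn i (\<beta> s) (t, x))))
      (at x)"
    unfolding wronskian_def using assms
    by (intro DERIV_sum DERIV_diff DERIV_mult' has_dx smooth2_dxn) auto
  then show ?thesis
    by (simp add: wronskian_def dxn_Suc sum.distrib[symmetric] algebra_simps)
qed

lemma has_dt_wronskian:
  assumes "\<And>s. s \<in> S \<Longrightarrow> smooth2 (\<alpha> s) \<and> smooth2 (\<beta> s)"
    and "\<And>s z. s \<in> S \<Longrightarrow> dt (\<alpha> s) z + dxn 2 (\<alpha> s) z = 0"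
    and "\<And>s z. s \<in> S \<Longrightarrow> dt (\<beta> s) z + dxn 2 (\<beta> s) z = 0"
  shows "((\<lambda>t. wronskian S \<alpha> \<beta> i j (t, x)) has_real_derivative
           - (wronskian S \<alpha> \<beta> (Suc (Suc i)) j (t, x) + wronskian S \<alpha> \<beta> i (Suc (Suc j)) (t, x))) (at t)"
proof -
  have "((\<lambda>t. wronskian S \<alpha> \<beta> i j (t, x)) has_real_derivative
      (\<Sum>s\<in>S. dxn i (\<alpha> s) (t, x) * - dxn (Suc (Suc j)) (\<beta> s) (t, x)
                + - dxn (Suc (Suc i)) (\<alpha> s) (t, x) * dxn j (\<beta> s) (t, x)
        - (dxn j (\<alpha> s) (t, x) * - dxn (Suc (Suc i)) (\<beta> s) (t, x)
                + - dxn (Suc (Suc j)) (\<alpha> s) (t, x) * dxn i (\<beta> s) (t, x))))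
      (at t)"
    unfolding wronskian_def using assms
    by (intro DERIV_sum DERIV_diff DERIV_mult' has_dt_dxn_backward_heat) auto
  then show ?thesis
    by (simp add: wronskian_def sum.distrib[symmetric] sum_negf[symmetric] algebra_simps)
qed

lemma wronskian_x_step:
  assumes "\<And>s. s \<in> S \<Longrightarrow> smooth2 (\<alpha> s) \<and> smooth2 (\<beta> s)"
    and "wronskian S \<alpha> \<beta> i j = (\<lambda>_. 0)"
  shows "wronskian S \<alpha> \<beta> (Suc i) j z = - wronskian S \<alpha> \<beta> i (Suc j) z"
proof (cases z)
  case (Pair t x)
  have "((\<lambda>x. wronskian S \<alpha> \<beta> i j (t, x)) has_real_derivative 0) (at x)"
    using assms(2) by simp
  with has_dx_wronskian[OF assms(1)]
  have "wronskian S \<alpha> \<beta> (Suc i) j (t, x) + wronskian S \<alpha> \<beta> i (Suc j) (t, x) = 0"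
    by (rule DERIV_unique)
  then show ?thesis using Pair by (simp add: eq_neg_iff_add_eq_0)
qed

lemma wronskian_t_step:
  assumes "\<And>s. s \<in> S \<Longrightarrow> smooth2 (\<alpha> s) \<and> smooth2 (\<beta> s)"
    and "\<And>s z. s \<in> S \<Longrightarrow> dt (\<alpha> s) z + dxn 2 (\<alpha> s) z = 0"
    and "\<And>s z. s \<in> S \<Longrightarrow> dt (\<beta> s) z + dxn 2 (\<beta> s) z = 0"
    and "wronskian S \<alpha> \<beta> i j = (\<lambda>_. 0)"
  shows "wronskian S \<alpha> \<beta> (Suc (Suc i)) j z = - wronskian S \<alpha> \<beta> i (Suc (Suc j)) z"
proof (cases z)
  case (Pair t x)
  have "((\<lambda>t. wronskian S \<alpha> \<beta> i j (t, x)) has_real_derivative 0) (at t)"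
    using assms(4) by simp
  with has_dt_wronskian[OF assms(1-3)]
  have "- (wronskian S \<alpha> \<beta> (Suc (Suc i)) j (t, x) + wronskian S \<alpha> \<beta> i (Suc (Suc j)) (t, x)) = 0"
    by (rule DERIV_unique)
  then show ?thesis using Pair by (simp add: eq_neg_iff_add_eq_0)
qed

theorem lemma5:
  fixes \<alpha> \<beta> :: "nat \<Rightarrow> real \<times> real \<Rightarrow> real" and p :: nat
  assumes smooth: "\<And>s. s \<in> {1..p} \<Longrightarrow> smooth2 (\<alpha> s) \<and> smooth2 (\<beta> s)"
    and heat_\<alpha>: "\<And>s z. s \<in> {1..p} \<Longrightarrow> dt (\<alpha> s) z + dxn 2 (\<alpha> s) z = 0"
    and heat_\<beta>: "\<And>s z. s \<in> {1..p} \<Longrightarrow> dt (\<beta> s) z + dxn 2 (\<beta> s) z = 0"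
    and wronsk: "\<And>z. (\<Sum>s=1..p. dx (\<alpha> s) z * \<beta> s z - \<alpha> s z * dx (\<beta> s) z) = 0"
  shows "\<forall>i j z. (\<Sum>s=1..p. dxn i (\<alpha> s) z * dxn j (\<beta> s) z
                          - dxn j (\<alpha> s) z * dxn i (\<beta> s) z) = 0"
proof (intro allI)
  fix i j z
  have "wronskian {1..p} \<alpha> \<beta> i j = (\<lambda>_. 0)"
  proof (rule vanishing_by_weight)
    show "wronskian {1..p} \<alpha> \<beta> 1 0 = (\<lambda>_. 0)"
      by (rule ext) (simp only: wronskian_1_0 wronsk)
  next
    show "wronskian {1..p} \<alpha> \<beta> j i z = - wronskian {1..p} \<alpha> \<beta> i j z" for i j z
      by (rule wronskian_swap)
  next
    show "wronskian {1..p} \<alpha> \<beta> (Suc i) j z = - wronskian {1..p} \<alpha> \<beta> i (Suc j) z"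
      if "wronskian {1..p} \<alpha> \<beta> i j = (\<lambda>_. 0)" for i j z
      using smooth that by (rule wronskian_x_step)
  next
    show "wronskian {1..p} \<alpha> \<beta> (Suc (Suc i)) j z = - wronskian {1..p} \<alpha> \<beta> i (Suc (Suc j)) z"
      if "wronskian {1..p} \<alpha> \<beta> i j = (\<lambda>_. 0)" for i j z
      using smooth heat_\<alpha> heat_\<beta> that by (rule wronskian_t_step)
  qed
  then have "wronskian {1..p} \<alpha> \<beta> i j z = 0"
    by simp
  then show "(\<Sum>s=1..p. dxn i (\<alpha> s) z * dxn j (\<beta> s) z - dxn j (\<alpha> s) z * dxn i (\<beta> s) z) = 0"
    by (simp only: wronskian_def)
qed

end
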